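(* Let $f\colon\mathbb{F}_2^n\times\mathbb{F}_2^d\to\mathbb{F}_2^r$ be a strong, linear, lossless condenser for min-entropy $m$ with error $\epsilon$, and for each seed $u$ let $H_u$ be the $r\times n$ matrix with $f(x,u)=H_ux$ and $\mathcal{C}_u:=\{x\in\mathbb{F}_2^n:H_ux=0\}$. Let $\mathcal{Z}$ be a flat distribution on $\mathbb{F}_2^n$ with entropy $m$. Then for at least a $1-2\sqrt{\epsilon}$ fraction of the choices of $u\in\mathbb{F}_2^d$, we have $\mathcal{E}(\mathcal{C}_u,\mathcal{Z})\le\sqrt{\epsilon}$.
   Context: Statistical distance is half the $\ell_1$ distance. A flat distribution of entropy $m$ is the uniform distribution on a set of size $2^m$. $f$ is a strong lossless condenser for min-entropy $m$ with error $\epsilon$ if for every distribution $\mathcal{X}$ on $\mathbb{F}_2^n$ with min-entropy at least $m$ (all probabilities at most $2^{-m}$), $X\sim\mathcal{X}$, and independent uniform $U\in\mathbb{F}_2^d$, $(U,f(X,U))$ is within statistical distance $\epsilon$ of some distribution $(\mathcal{U}_d,\mathcal{Y})$ of min-entropy at least $d+m$; linear means $f(\cdot,u)$ is linear for each $u$. Consider the additive noise channel which, on input $x\in\mathbb{F}_2^n$, outputs $x+z$ with $z\sim\mathcal{Z}$ independent of $x$. The brute-force decoder for $\mathcal{C}_u$, given $\hat{y}$, finds a codeword $y\in\mathcal{C}_u$ and $z\in\mathrm{supp}(\mathcal{Z})$ with $\hat{y}=y+z$ and outputs $y$ (with arbitrary choice among several such $y$, and an arbitrary codeword if none exists). $\mathcal{E}(\mathcal{C}_u,\mathcal{Z})$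 denotes its error probability, which we take to be $\max_{x\in\mathcal{C}_u}\Pr_{z\sim\mathcal{Z}}[\exists x'\in\mathcal{C}_u,\exists z'\in\mathrm{supp}(\mathcal{Z})\setminus\{z\}: x+z=x'+z']$ (the probability that the decoder may fail to output the transmitted codeword). *)

theory Defs
  imports "HOL-Analysis.Analysis" "HOL-Probability.Probability" "HOL-Library.Z2"
begin

text \<open>F_2 is the type bit; F_2^n is bit^'n for a finite index type 'n.\<close>

instance bit :: finite
proof
  have "(UNIV :: bit set) = {0, 1}" by (auto intro: bit.exhaust)
  then show "finite (UNIV :: bit set)" by (metis finite.emptyI finite_insert)
qed

definition stat_dist :: "'a::finite pmf \<Rightarrow> 'a pmf \<Rightarrow> real" where
  "stat_dist P Q = (1/2) * (\<Sum>a\<in>UNIV. \<bar>pmf P a - pmf Q a\<bar>)"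

definition min_entropy_ge :: "'a pmf \<Rightarrow> real \<Rightarrow> bool" where
  "min_entropy_ge P k \<longleftrightarrow> (\<forall>a. pmf P a \<le> 2 powr (- k))"

definition strong_lossless_condenser ::
  "(bit^'n \<Rightarrow> bit^'d \<Rightarrow> bit^'r) \<Rightarrow> real \<Rightarrow> real \<Rightarrow> bool" where
  "strong_lossless_condenser f m eps \<longleftrightarrow>
     (\<forall>X :: (bit^'n) pmf. min_entropy_ge X m \<longrightarrow>
        (\<exists>W :: ((bit^'d) \<times> (bit^'r)) pmf.
            map_pmf fst W = pmf_of_set UNIV \<and>
            min_entropy_ge W (real CARD('d) + m) \<and>
            stat_dist (map_pmf (\<lambda>(x, u). (u, f x u)) (pair_pmf X (pmf_of_set UNIV))) W \<le> eps))"

definition linear_condenser :: "(bit^'n \<Rightarrow> bit^'d \<Rightarrow> bit^'r) \<Rightarrow> bool" where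
  "linear_condenser f \<longleftrightarrow> (\<forall>u. Vector_Spaces.linear (*s) (*s) (\<lambda>x. f x u))"

definition flat_dist :: "'a pmf \<Rightarrow> real \<Rightarrow> bool" where
  "flat_dist Z m \<longleftrightarrow> (\<exists>S. finite S \<and> S \<noteq> {} \<and> real (card S) = 2 powr m \<and> Z = pmf_of_set S)"

text \<open>Error probability of the brute-force decoder for code C over the additive noise channel Z.\<close>
definition decoding_error :: "(bit^'n) set \<Rightarrow> (bit^'n) pmf \<Rightarrow> real" where
  "decoding_error C Z = Max ((\<lambda>x. measure_pmf.prob Z
       {z. \<exists>x'\<in>C. \<exists>z'\<in>set_pmf Z - {z}. x + z = x' + z'}) ` C)"

end

theory Submission
  imports Defs
begin

text \<open>
  Since the code \<open>C\<^sub>u\<close> is the kernel of \<open>H\<^sub>u\<close>, the brute-force decoder fails on a noise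
  vector \<open>z \<in> S = supp Z\<close> exactly when some other \<open>z' \<in> S\<close> has the same syndrome,
  so \<open>\<E>(C\<^sub>u, Z)\<close> is the fraction of \<open>S\<close> lying in syndrome classes of size at least 2.
  A class of size \<open>c \<ge> 2\<close> gives \<open>(U, H\<^sub>U Z)\<close> a point of probability \<open>c/(|S| 2\<^sup>d)\<close>, an excess
  of at least \<open>c/(2 |S| 2\<^sup>d)\<close> over the bound \<open>2\<^sup>-\<^sup>d\<^sup>-\<^sup>m\<close> satisfied by any distribution of
  min-entropy \<open>d + m\<close>. The total excess is at most the statistical distance \<open>\<epsilon>\<close>, so
  the seed-average of \<open>\<E>(C\<^sub>u, Z)\<close> is at most \<open>2\<epsilon>\<close>, and Markov's inequality at threshold
  \<open>\<surd>\<epsilon>\<close> finishes the proof.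
\<close>

definition collision_set :: "('a \<Rightarrow> 'b) \<Rightarrow> 'a set \<Rightarrow> 'a set" where
  "collision_set g S = {z\<in>S. \<exists>z'\<in>S. z' \<noteq> z \<and> g z' = g z}"

lemma kernel_code_confusable_iff:
  fixes A :: "'a::comm_ring_1^'n^'r"
  assumes x: "A *v x = 0"
  shows "(\<exists>x'\<in>{x. A *v x = 0}. \<exists>z'\<in>S - {z}. x + z = x' + z')
           \<longleftrightarrow> (\<exists>z'\<in>S. z' \<noteq> z \<and> A *v z' = A *v z)"
proof
  assume "\<exists>x'\<in>{x. A *v x = 0}. \<exists>z'\<in>S - {z}. x + z = x' + z'"
  then obtain x' z' where x': "A *v x' = 0" and "z' \<in> S" "z' \<noteq> z"
    and sum_eq: "x + z = x' + z'"
    by auto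
  have "A *v z = A *v (x + z)" using x by (simp add: matrix_vector_right_distrib)
  also have "\<dots> = A *v z'" using x' by (simp add: sum_eq matrix_vector_right_distrib)
  finally show "\<exists>z'\<in>S. z' \<noteq> z \<and> A *v z' = A *v z"
    using \<open>z' \<in> S\<close> \<open>z' \<noteq> z\<close> by auto
next
  assume "\<exists>z'\<in>S. z' \<noteq> z \<and> A *v z' = A *v z"
  then obtain z' where "z' \<in> S" "z' \<noteq> z" "A *v z' = A *v z" by auto
  moreover have "A *v (x + z - z') = 0"
    using x \<open>A *v z' = A *v z\<close> by (simp add: algebra_simps)
  moreover have "x + z = (x + z - z') + z'" by simp
  ultimately show "\<exists>x'\<in>{x. A *v x = 0}. \<exists>z'\<in>S - {z}. x + z = x' + z'"
    by blast
qed

lemma decoding_error_kernel_code: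
  fixes A :: "bit^'n^'r"
  assumes "finite S" "S \<noteq> {}"
  shows "decoding_error {x. A *v x = 0} (pmf_of_set S)
           = real (card (collision_set (\<lambda>z. A *v z) S)) / real (card S)"
proof -
  let ?C = "{x. A *v x = 0}"
  let ?err = "\<lambda>x. measure_pmf.prob (pmf_of_set S)
                {z. \<exists>x'\<in>?C. \<exists>z'\<in>set_pmf (pmf_of_set S) - {z}. x + z = x' + z'}"
  let ?rate = "real (card (collision_set (\<lambda>z. A *v z) S)) / real (card S)"
  have err: "?err x = ?rate" if "x \<in> ?C" for x
  proof -
    have "S \<inter> {z. \<exists>x'\<in>?C. \<exists>z'\<in>S - {z}. x + z = x' + z'} = collision_set (\<lambda>z. A *v z) S"
      using kernel_code_confusable_iff[of A x S] that by (auto simp: collision_set_def)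
    then show ?thesis
      using assms by (simp add: measure_pmf_of_set)
  qed
  have "?err ` ?C = (\<lambda>_. ?rate) ` ?C"
    by (rule image_cong[OF refl]) (rule err)
  also have "\<dots> = {?rate}"
    by (rule image_constant[of 0]) simp
  finally show ?thesis
    unfolding decoding_error_def by simp
qed

lemma card_collision_set_le_fiber_excess:
  fixes g :: "'a \<Rightarrow> 'b::finite"
  assumes "finite S"
  shows "real (card (collision_set g S))
           \<le> 2 * (\<Sum>y\<in>UNIV. max (real (card {z\<in>S. g z = y}) - 1) 0)"
proof -
  have fiber: "real (card {z\<in>collision_set g S. g z = y})
                 \<le> 2 * max (real (card {z\<in>S. g z = y}) - 1) 0" for y
  proof (cases "card {z\<in>S. g z = y} \<ge> 2")
    case True
    have "{z\<in>collision_set g S. g z = y} \<subseteq> {z\<in>S. g z = y}"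
      by (auto simp: collision_set_def)
    then have "card {z\<in>collision_set g S. g z = y} \<le> card {z\<in>S. g z = y}"
      using assms by (intro card_mono) auto
    then show ?thesis using True by (auto simp: max_def)
  next
    case False
    have no_collision: "{z\<in>collision_set g S. g z = y} = {}"
    proof (rule ccontr)
      assume "{z\<in>collision_set g S. g z = y} \<noteq> {}"
      then obtain z z' where "z \<in> S" "z' \<in> S" "z' \<noteq> z" "g z' = y" "g z = y"
        by (auto simp: collision_set_def)
      then have "card {z, z'} \<le> card {z\<in>S. g z = y}"
        using assms by (intro card_mono) auto
      then show False using False \<open>z' \<noteq> z\<close> by simp
    qed
    show ?thesis unfolding no_collision by simp
  qed
  have "finite (collision_set g S)"
    using assms by (simp add: collision_set_def)
  then have "(\<Sum>y\<in>UNIV. \<Sum>z\<in>{z\<in>collision_set g S. g z = y}. 1::real)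
               = (\<Sum>z\<in>collision_set g S. 1)"
    by (rule sum.group) auto
  then have "real (card (collision_set g S))
               = (\<Sum>y\<in>UNIV. real (card {z\<in>collision_set g S. g z = y}))"
    by simp
  also have "\<dots> \<le> (\<Sum>y\<in>UNIV. 2 * max (real (card {z\<in>S. g z = y}) - 1) 0)"
    by (intro sum_mono fiber)
  finally show ?thesis
    by (simp add: sum_distrib_left)
qed

lemma stat_dist_ge_excess:
  fixes P Q :: "'a::finite pmf"
  assumes "\<And>a. pmf Q a \<le> b"
  shows "(\<Sum>a\<in>UNIV. max (pmf P a - b) 0) \<le> stat_dist P Q"
proof -
  have "(\<Sum>a\<in>UNIV. pmf P a) = 1" "(\<Sum>a\<in>UNIV. pmf Q a) = 1"
    by (auto intro: sum_pmf_eq_1)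
  then have "(\<Sum>a\<in>UNIV. pmf P a - pmf Q a) = 0"
    by (simp add: sum_subtractf)
  moreover have "\<bar>pmf P a - pmf Q a\<bar> = 2 * max (pmf P a - pmf Q a) 0 - (pmf P a - pmf Q a)"
    for a by (simp add: max_def)
  ultimately have "stat_dist P Q = (\<Sum>a\<in>UNIV. max (pmf P a - pmf Q a) 0)"
    unfolding stat_dist_def by (simp add: sum_subtractf sum_distrib_left)
  moreover have "max (pmf P a - b) 0 \<le> max (pmf P a - pmf Q a) 0" for a
    using assms[of a] by (simp add: max_def)
  ultimately show ?thesis
    by (simp add: sum_mono)
qed

lemma min_entropy_ge_pmf_of_set:
  assumes "finite S" "S \<noteq> {}" "real (card S) = 2 powr k"
  shows "min_entropy_ge (pmf_of_set S) k"
  unfolding min_entropy_ge_def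
proof
  fix a
  have "pmf (pmf_of_set S) a \<le> 1 / real (card S)"
    using assms by (simp add: indicator_def)
  then show "pmf (pmf_of_set S) a \<le> 2 powr (- k)"
    using assms by (simp add: powr_minus divide_inverse)
qed

lemma pmf_seeded_output_pmf_of_set:
  fixes g :: "'x::countable \<Rightarrow> 'u::finite \<Rightarrow> 'y"
  assumes "finite S" "S \<noteq> {}"
  shows "pmf (map_pmf (\<lambda>(x, u). (u, g x u)) (pair_pmf (pmf_of_set S) (pmf_of_set UNIV))) (u, y)
           = real (card {x\<in>S. g x u = y}) / (real (card S) * real CARD('u))"
proof -
  have preimage: "(\<lambda>(x, u). (u, g x u)) -` {(u, y)} = {x. g x u = y} \<times> {u}"
    by auto
  have "S \<inter> {x. g x u = y} = {x\<in>S. g x u = y}"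
    by auto
  then have fiber: "measure_pmf.prob (pmf_of_set S) {x. g x u = y}
                      = real (card {x\<in>S. g x u = y}) / real (card S)"
    using assms by (simp add: measure_pmf_of_set)
  have "pmf (map_pmf (\<lambda>(x, u). (u, g x u)) (pair_pmf (pmf_of_set S) (pmf_of_set UNIV))) (u, y)
      = measure_pmf.prob (pmf_of_set S) {x. g x u = y} * measure_pmf.prob (pmf_of_set UNIV) {u}"
    unfolding pmf_map preimage by (rule measure_pmf_prob_product) auto
  then show ?thesis
    by (simp add: fiber measure_pmf_of_set)
qed

lemma card_bit [simp]: "CARD(bit) = 2"
proof -
  have "(UNIV :: bit set) = {0, 1}"
    by (auto intro: bit.exhaust)
  then have "CARD(bit) = card {0 :: bit, 1}"
    by simp
  then show ?thesis
    by simp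
qed

lemma lossless_condenser_fiber_excess:
  fixes f :: "bit^'n \<Rightarrow> bit^'d \<Rightarrow> bit^'r"
  assumes cond: "strong_lossless_condenser f m eps"
    and S: "finite S" "S \<noteq> {}" "real (card S) = 2 powr m"
  shows "(\<Sum>u\<in>UNIV. \<Sum>y\<in>UNIV. max (real (card {x\<in>S. f x u = y}) - 1) 0)
           \<le> eps * real (card S) * real CARD(bit^'d)"
proof -
  define D where "D = map_pmf (\<lambda>(x, u). (u, f x u)) (pair_pmf (pmf_of_set S) (pmf_of_set UNIV))"
  define KN where "KN = real (card S) * real CARD(bit^'d)"
  have "KN > 0"
    using S by (simp add: KN_def card_gt_0_iff)
  obtain W :: "((bit^'d) \<times> (bit^'r)) pmf"
    where W_entropy: "min_entropy_ge W (real CARD('d) + m)" and W_close: "stat_dist D W \<le> eps"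
    using cond min_entropy_ge_pmf_of_set[OF S] unfolding strong_lossless_condenser_def D_def
    by blast
  have "KN = 2 powr (real CARD('d) + m)"
    using S by (simp add: KN_def powr_add powr_realpow)
  then have "2 powr (- (real CARD('d) + m)) = 1 / KN"
    unfolding powr_minus by (simp add: divide_inverse)
  then have W_bound: "pmf W a \<le> 1 / KN" for a
    using W_entropy unfolding min_entropy_ge_def by metis
  have excess: "max (pmf D (u, y) - 1 / KN) 0 = max (real (card {x\<in>S. f x u = y}) - 1) 0 / KN"
    for u y
    using S \<open>KN > 0\<close>
    by (auto simp: D_def KN_def pmf_seeded_output_pmf_of_set max_def field_simps)
  have "(\<Sum>u\<in>UNIV. \<Sum>y\<in>UNIV. max (real (card {x\<in>S. f x u = y}) - 1) 0) / KN
      = (\<Sum>u\<in>UNIV. \<Sum>y\<in>UNIV. max (pmf D (u, y) - 1 / KN) 0)"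
    by (simp add: excess sum_divide_distrib)
  also have "\<dots> = (\<Sum>a\<in>UNIV. max (pmf D a - 1 / KN) 0)"
    by (simp add: sum.cartesian_product)
  also have "\<dots> \<le> stat_dist D W"
    using W_bound by (rule stat_dist_ge_excess)
  also have "\<dots> \<le> eps"
    by (rule W_close)
  finally have "(\<Sum>u\<in>UNIV. \<Sum>y\<in>UNIV. max (real (card {x\<in>S. f x u = y}) - 1) 0) / KN \<le> eps" .
  then show ?thesis
    using \<open>KN > 0\<close> by (simp add: KN_def divide_le_eq mult.assoc)
qed

lemma markov_sqrt_threshold:
  fixes B :: "'a::finite \<Rightarrow> real"
  assumes nonneg: "\<And>u. B u \<ge> 0"
    and sum_le: "(\<Sum>u\<in>UNIV. B u) \<le> 2 * eps * real CARD('a)"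
  shows "(1 - 2 * sqrt eps) * real CARD('a) \<le> real (card {u. B u \<le> sqrt eps})"
proof (cases "eps > 0")
  case True
  let ?G = "{u. B u \<le> sqrt eps}"
  have "real (card (- ?G)) * sqrt eps = (\<Sum>u\<in>- ?G. sqrt eps)"
    by simp
  also have "\<dots> \<le> (\<Sum>u\<in>- ?G. B u)"
    by (intro sum_mono) auto
  also have "\<dots> \<le> (\<Sum>u\<in>UNIV. B u)"
    by (intro sum_mono2) (auto simp: nonneg)
  also have "\<dots> \<le> 2 * eps * real CARD('a)"
    by (rule sum_le)
  also have "\<dots> = 2 * sqrt eps * real CARD('a) * sqrt eps"
    using True by (simp add: algebra_simps flip: power2_eq_square)
  finally have "real (card (- ?G)) * sqrt eps \<le> (2 * sqrt eps * real CARD('a)) * sqrt eps" .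
  then have "real (card (- ?G)) \<le> 2 * sqrt eps * real CARD('a)"
    by (rule mult_right_le_imp_le) (use True in simp)
  moreover have "card ?G + card (- ?G) = CARD('a)"
    using card_Un_disjoint[of ?G "- ?G"] by simp
  ultimately show ?thesis
    by (simp add: algebra_simps flip: of_nat_add)
next
  case False
  have "0 \<le> (\<Sum>u\<in>UNIV. B u)"
    by (simp add: nonneg sum_nonneg)
  then have "0 \<le> eps * real CARD('a)"
    using sum_le by simp
  then have "eps = 0"
    using False by (simp add: zero_le_mult_iff)
  then have "(\<Sum>u\<in>UNIV. B u) \<le> 0"
    using sum_le by simp
  moreover have "B u \<le> (\<Sum>u\<in>UNIV. B u)" for u
    using nonneg by (intro member_le_sum) auto
  ultimately have "B u = 0" for u
    using nonneg[of u] by (meson order_antisym order_trans)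
  then show ?thesis
    using \<open>eps = 0\<close> by simp
qed

theorem mainTheorem17:
  fixes f :: "bit^'n \<Rightarrow> bit^'d \<Rightarrow> bit^'r"
    and H :: "bit^'d \<Rightarrow> bit^'n^'r"
    and m eps :: real
    and Z :: "(bit^'n) pmf"
  assumes cond: "strong_lossless_condenser f m eps"
    and lin: "linear_condenser f"
    and H: "\<And>x u. f x u = H u *v x"
    and flat: "flat_dist Z m"
  shows "real (card {u :: bit^'d. decoding_error {x. H u *v x = 0} Z \<le> sqrt eps})
           \<ge> (1 - 2 * sqrt eps) * real CARD(bit^'d)"
proof -
  obtain S where S: "finite S" "S \<noteq> {}" "real (card S) = 2 powr m" and Z: "Z = pmf_of_set S"
    using flat unfolding flat_dist_def by blast
  have error: "decoding_error {x. H u *v x = 0} Z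
                 = real (card (collision_set (\<lambda>x. f x u) S)) / real (card S)" for u
    using S by (simp add: Z H decoding_error_kernel_code)
  have "decoding_error {x. H u *v x = 0} Z
      \<le> 2 * (\<Sum>y\<in>UNIV. max (real (card {x\<in>S. f x u = y}) - 1) 0) / real (card S)" for u
    unfolding error by (intro divide_right_mono card_collision_set_le_fiber_excess S(1)) simp
  then have "(\<Sum>u\<in>UNIV. decoding_error {x. H u *v x = 0} Z)
      \<le> 2 * (\<Sum>u\<in>UNIV. \<Sum>y\<in>UNIV. max (real (card {x\<in>S. f x u = y}) - 1) 0) / real (card S)"
    by (simp add: sum_mono sum_divide_distrib sum_distrib_left)
  also have "\<dots> \<le> 2 * (eps * real (card S) * real CARD(bit^'d)) / real (card S)"
    using lossless_condenser_fiber_excess[OF cond S] by (intro divide_right_mono) simp_all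
  also have "\<dots> = 2 * eps * real CARD(bit^'d)"
    using S(1,2) by simp
  finally show ?thesis
    by (intro markov_sqrt_threshold) (simp_all add: error)
qed

end
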